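(* In the setting of the two-hidden-layer main theorem (with the matrix $A\in\mathbb{R}^{(K+2)\times(K+2)}$ defined there from $C_w,C_v,C_u$), let $\tilde\rho_x=\max_{i\in[n]}\|x^i\|_1$, $$\zeta_1=\rho_w\sum_{j=1}^{n_2}\Big[\rho_v\sum_{l=1}^{n_1}(\rho_u\tilde\rho_x)^{\alpha_l}\Big]^{\beta_j},\qquad \zeta_2=\rho_w\sum_{j=1}^{n_2}\beta_j\Big[\rho_v\sum_{l=1}^{n_1}(\rho_u\tilde\rho_x)^{\alpha_l}\Big]^{\beta_j}.$$ Then $C_w\le\zeta_1$ and $C_v\le\zeta_2$, and if $$p_w>4(K+2)\zeta_1+5,\quad p_v>2(K+2)\big[2\zeta_2+\|\beta\|_\infty\big]-1,\quad p_u>2(K+2)\|\alpha\|_\infty(2\zeta_2+\|\beta\|_\infty)-1,$$ then $\rho(A)<1$.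
   Context: Here $K,n_1,n_2\in\mathbb{N}$, $\rho_w,\rho_v,\rho_u>0$, $p_w,p_v,p_u\in(1,\infty)$, $p'=p/(p-1)$, $\alpha\in\mathbb{R}^{n_1}$, $\beta\in\mathbb{R}^{n_2}$ with entries $\ge1$, data $x^i\in\mathbb{R}^d_+$. $\rho_x=\max_i\|x^i\|_{p_u'}$, $\theta=\rho_v\Psi^\alpha_{p_v',p_u}(\mathbf{1},\rho_u\rho_x)$, $C_w=\rho_w\Psi^\beta_{p_w',p_v}(\mathbf{1},\theta)$, $C_v=\rho_w\Psi^\beta_{p_w',p_v}(\beta,\theta)$, $C_u=\|\alpha\|_\infty C_v$, where for $p,q\ge1$, $\gamma\in\mathbb{R}^r_{++}$, $\Psi^\gamma_{p,q}(\delta,t)=\big([\sum_{l\in J}(\delta_lt^{\gamma_l})^{pq/(q-\bar\gamma p)}]^{1-\bar\gamma p/q}+\max_{j\in J^c}(\delta_jt^{\gamma_j})^p\big)^{1/p}$ with $J=\{l:\gamma_lp<q\}$, $J^c=\{l:\gamma_lp\ge q\}$, $\bar\gamma=\min_{l\in J}\gamma_l$, empty sums/maxima $=0$. The matrix $A$: for $m,l\in[K]$, $A_{m,l}=4(p_w'-1)C_w$, $A_{m,K+1}=2(p_w'-1)(2C_v+\|\beta\|_\infty)$, $A_{m,K+2}=2(p_w'-1)(2C_u+\|\alpha\|_\infty\|\beta\|_\infty)$, $A_{K+1,l}=2(p_v'-1)(2C_w+1)$, $A_{K+1,K+1}=2(p_v'-1)(2C_v+\|\beta\|_\infty-1)$,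 $A_{K+1,K+2}=2(p_v'-1)(2C_u+\|\alpha\|_\infty\|\beta\|_\infty)$, $A_{K+2,l}=2(p_u'-1)(2C_w+1)$, $A_{K+2,K+1}=2(p_u'-1)(2C_v+\|\beta\|_\infty)$, $A_{K+2,K+2}=2(p_u'-1)(2C_u+\|\alpha\|_\infty\|\beta\|_\infty-1)$. $\rho(A)$ is the spectral radius. *)

theory Defs
  imports "HOL-Analysis.Analysis" "Jordan_Normal_Form.Spectral_Radius"
begin

definition conj_exp :: "real \<Rightarrow> real" where
  "conj_exp p = p / (p - 1)"

definition lp_norm :: "real \<Rightarrow> nat \<Rightarrow> (nat \<Rightarrow> real) \<Rightarrow> real" where
  "lp_norm p d x = (\<Sum>k<d. \<bar>x k\<bar> powr p) powr (1 / p)"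

(* sup norm of a vector in R^r, indices 0..<r (r >= 1) *)
definition sup_norm :: "nat \<Rightarrow> (nat \<Rightarrow> real) \<Rightarrow> real" where
  "sup_norm r x = Max ((\<lambda>l. \<bar>x l\<bar>) ` {..<r})"

definition Psi :: "nat \<Rightarrow> (nat \<Rightarrow> real) \<Rightarrow> real \<Rightarrow> real \<Rightarrow> (nat \<Rightarrow> real) \<Rightarrow> real \<Rightarrow> real" where
  "Psi r gamma p q delta t =
    (let J = {l \<in> {..<r}. gamma l * p < q};
         Jc = {l \<in> {..<r}. gamma l * p \<ge> q};
         gbar = (if J = {} then 0 else Min (gamma ` J));
         S = (\<Sum>l\<in>J. (delta l * t powr gamma l) powr (p * q / (q - gbar * p)));
         M = (if Jc = {} then 0 else Max ((\<lambda>j. (delta j * t powr gamma j) powr p) ` Jc))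
     in (S powr (1 - gbar * p / q) + M) powr (1 / p))"

(* the matrix A of size (K+2) x (K+2); index m < K corresponds to m+1 in [K],
   index K to K+1 and index K+1 to K+2 *)
definition A_mat :: "nat \<Rightarrow> real \<Rightarrow> real \<Rightarrow> real \<Rightarrow> real \<Rightarrow> real \<Rightarrow> real \<Rightarrow> real \<Rightarrow> real \<Rightarrow> real mat" where
  "A_mat K pw pv pu Cw Cv Cu na nb = mat (K+2) (K+2) (\<lambda>(i,j).
     if i < K then
       (if j < K then 4 * (conj_exp pw - 1) * Cw
        else if j = K then 2 * (conj_exp pw - 1) * (2 * Cv + nb)
        else 2 * (conj_exp pw - 1) * (2 * Cu + na * nb))
     else if i = K then
       (if j < K then 2 * (conj_exp pv - 1) * (2 * Cw + 1)
        else if j = K then 2 * (conj_exp pv - 1) * (2 * Cv + nb - 1)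
        else 2 * (conj_exp pv - 1) * (2 * Cu + na * nb))
     else
       (if j < K then 2 * (conj_exp pu - 1) * (2 * Cw + 1)
        else if j = K then 2 * (conj_exp pu - 1) * (2 * Cv + nb)
        else 2 * (conj_exp pu - 1) * (2 * Cu + na * nb - 1)))"

end

theory Submission
  imports Defs
begin

text \<open>
  Since \<open>x powr p\<close> is superadditive for \<open>p \<ge> 1\<close>, each of the two parts of
  \<open>Psi r gamma p q delta t\<close> is bounded by the \<open>p\<close>-th power of the corresponding partial sum
  of \<open>delta l * t powr gamma l\<close>, so \<open>Psi\<close> is at most the whole sum. Together with
  \<open>lp_norm p \<le> lp_norm 1\<close> and monotonicity in \<open>t\<close> this gives \<open>C_w \<le> zeta_1\<close> and
  \<open>C_v \<le> zeta_2\<close>. For the spectral radius,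
  \<open>A\<close> is entrywise nonnegative and, under the bounds on \<open>p_w, p_v, p_u\<close>, maps the positive
  vector \<open>(S, \<dots>, S, 2 C_w + 1, (2 C_w + 1) / \<parallel>alpha\<parallel>\<^sub>\<infinity>)\<close>, \<open>S = 2 C_v + \<parallel>beta\<parallel>\<^sub>\<infinity>\<close>,
  strictly below itself. Reading row \<open>i\<close> of \<open>A v = k v\<close> at the coordinate \<open>i\<close> maximising
  \<open>\<bar>v i\<bar> / d i\<close> then shows \<open>\<bar>k\<bar> < 1\<close> for every eigenvalue \<open>k\<close>.
\<close>

lemma sum_powr_le_powr_sum:
  fixes f :: "'a \<Rightarrow> real"
  assumes "finite I" "\<And>i. i \<in> I \<Longrightarrow> 0 \<le> f i" "1 \<le> r"
  shows "(\<Sum>i\<in>I. f i powr r) \<le> (\<Sum>i\<in>I. f i) powr r"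
proof -
  define T where "T = (\<Sum>i\<in>I. f i)"
  have "0 \<le> T" unfolding T_def using assms by (simp add: sum_nonneg)
  show ?thesis
  proof (cases "T = 0")
    case True
    then have "\<forall>i\<in>I. f i = 0" using assms sum_nonneg_eq_0_iff unfolding T_def by blast
    then show ?thesis using True assms unfolding T_def by simp
  next
    case False
    with \<open>0 \<le> T\<close> have "0 < T" by simp
    \<comment> \<open>each share \<open>f i / T\<close> lies in \<open>[0, 1]\<close>, where raising to the power \<open>r\<close> can only decrease it\<close>
    have term_le: "f i powr r \<le> f i / T * T powr r" if "i \<in> I" for i
    proof -
      have fi: "0 \<le> f i" "f i \<le> T" using assms that unfolding T_def
        by (auto intro: member_le_sum)
      have "(f i / T) powr r \<le> (f i / T) powr 1"
        using fi \<open>0 < T\<close> assms(3) by (intro powr_mono') auto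
      then have "(f i / T) powr r \<le> f i / T" using fi \<open>0 < T\<close> by simp
      moreover have "f i powr r = (f i / T) powr r * T powr r"
        using fi \<open>0 < T\<close> by (simp add: powr_divide)
      ultimately show ?thesis using fi \<open>0 < T\<close> by (metis mult_right_mono powr_ge_zero)
    qed
    have "(\<Sum>i\<in>I. f i powr r) \<le> (\<Sum>i\<in>I. f i / T * T powr r)"
      using term_le by (rule sum_mono)
    also have "\<dots> = T / T * T powr r"
      by (simp add: T_def sum_distrib_right[symmetric] sum_divide_distrib[symmetric])
    also have "\<dots> = T powr r" using \<open>0 < T\<close> by simp
    finally show ?thesis unfolding T_def .
  qed
qed

lemma powr_add_powr_le:
  fixes a b p :: real
  assumes "0 \<le> a" "0 \<le> b" "1 \<le> p"
  shows "a powr p + b powr p \<le> (a + b) powr p"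
  using sum_powr_le_powr_sum[of "{0::nat, 1}" "\<lambda>i. if i = 0 then a else b" p] assms by simp

lemma sum_powr_powr_le_powr_sum:
  fixes f :: "'a \<Rightarrow> real"
  assumes "finite I" "\<And>i. i \<in> I \<Longrightarrow> 0 \<le> f i" "1 \<le> p" "0 < q" "0 \<le> g" "g * p < q"
  shows "(\<Sum>i\<in>I. f i powr (p * q / (q - g * p))) powr (1 - g * p / q) \<le> (\<Sum>i\<in>I. f i) powr p"
proof -
  define e where "e = 1 - g * p / q"
  have "0 \<le> g * p / q" using assms(3-5) by simp
  then have "0 < e" "e \<le> 1" "p * q / (q - g * p) = p / e"
    using assms(4,6) by (auto simp: e_def field_simps)
  moreover from this have "1 \<le> p / e"
    using assms(3) by (simp add: le_divide_eq)
  ultimately have "(\<Sum>i\<in>I. f i powr (p / e)) powr e \<le> ((\<Sum>i\<in>I. f i) powr (p / e)) powr e"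
    using assms(1,2) by (intro powr_mono2 sum_powr_le_powr_sum) (auto intro: sum_nonneg)
  also have "\<dots> = (\<Sum>i\<in>I. f i) powr p"
    using \<open>0 < e\<close> assms(2) by (simp add: powr_powr sum_nonneg)
  finally show ?thesis unfolding e_def[symmetric] \<open>p * q / (q - g * p) = p / e\<close> .
qed

lemma Max_image_mono:
  fixes f g :: "'a \<Rightarrow> 'b::linorder"
  assumes "finite I" "I \<noteq> {}" "\<And>i. i \<in> I \<Longrightarrow> f i \<le> g i"
  shows "Max (f ` I) \<le> Max (g ` I)"
proof -
  have "f i \<le> Max (g ` I)" if "i \<in> I" for i
    using assms that by (meson Max_ge finite_imageI image_eqI order_trans)
  then show ?thesis using assms by (simp add: Max_le_iff)
qed

lemma Psi_nonneg: "0 \<le> Psi r gamma p q delta t"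
  by (simp add: Psi_def Let_def)

lemma Psi_le_sum:
  assumes "1 \<le> p" "0 < q" "\<And>l. l < r \<Longrightarrow> 0 \<le> delta l" "\<And>l. l < r \<Longrightarrow> 0 \<le> gamma l"
    and "0 \<le> t"
  shows "Psi r gamma p q delta t \<le> (\<Sum>l<r. delta l * t powr gamma l)"
proof -
  define J where "J = {l \<in> {..<r}. gamma l * p < q}"
  define Jc where "Jc = {l \<in> {..<r}. gamma l * p \<ge> q}"
  define gbar where "gbar = (if J = {} then 0 else Min (gamma ` J))"
  define v where "v l = delta l * t powr gamma l" for l
  define S where "S = (\<Sum>l\<in>J. v l powr (p * q / (q - gbar * p)))"
  define M where "M = (if Jc = {} then 0 else Max ((\<lambda>j. v j powr p) ` Jc))"
  have v_nonneg: "0 \<le> v l" if "l < r" for l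
    using assms that unfolding v_def by simp
  have fin: "finite J" "finite Jc" unfolding J_def Jc_def by auto
  define e where "e = 1 - gbar * p / q"
  have Psi_eq: "Psi r gamma p q delta t = (S powr e + M) powr (1 / p)"
    unfolding Psi_def Let_def J_def[symmetric] Jc_def[symmetric] gbar_def[symmetric]
      S_def M_def v_def e_def ..
  have S_le: "S powr e \<le> (\<Sum>l\<in>J. v l) powr p"
  proof (cases "J = {}")
    case True
    then show ?thesis by (simp add: S_def)
  next
    case False
    then have "gbar \<in> gamma ` J" using fin by (simp add: gbar_def)
    then have "gbar * p < q" "0 \<le> gbar" using assms(4) by (auto simp: J_def)
    then show ?thesis
      unfolding S_def e_def using fin(1) v_nonneg assms(1,2)
      by (intro sum_powr_powr_le_powr_sum) (auto simp: J_def)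
  qed
  have M_le: "M \<le> (\<Sum>l\<in>Jc. v l) powr p"
    using fin(2) v_nonneg assms(1) by (auto simp: M_def Jc_def intro!: powr_mono2 member_le_sum)
  have "0 \<le> M"
    using fin(2) by (auto simp: M_def Max_ge_iff)
  have sum_split: "(\<Sum>l<r. v l) = (\<Sum>l\<in>J. v l) + (\<Sum>l\<in>Jc. v l)"
  proof -
    have "{..<r} = J \<union> Jc" "J \<inter> Jc = {}" unfolding J_def Jc_def by auto
    then show ?thesis using fin by (simp add: sum.union_disjoint)
  qed
  have sums_nonneg: "0 \<le> (\<Sum>l\<in>J. v l)" "0 \<le> (\<Sum>l\<in>Jc. v l)"
    using v_nonneg by (auto simp: J_def Jc_def intro: sum_nonneg)
  have "S powr e + M \<le> (\<Sum>l<r. v l) powr p"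
    using S_le M_le powr_add_powr_le[OF sums_nonneg assms(1)] unfolding sum_split by linarith
  then have "(S powr e + M) powr (1 / p) \<le> ((\<Sum>l<r. v l) powr p) powr (1 / p)"
    using \<open>0 \<le> M\<close> assms(1) by (intro powr_mono2) auto
  also have "\<dots> = (\<Sum>l<r. v l)"
    using sums_nonneg assms(1) unfolding sum_split by (simp add: powr_powr)
  finally show ?thesis unfolding Psi_eq v_def .
qed

lemma Psi_le_sum_of_le:
  assumes "1 \<le> p" "0 < q" "\<And>l. l < r \<Longrightarrow> 0 \<le> delta l" "\<And>l. l < r \<Longrightarrow> 0 \<le> gamma l"
    and "0 \<le> t" "t \<le> t'"
  shows "Psi r gamma p q delta t \<le> (\<Sum>l<r. delta l * t' powr gamma l)"
proof -
  have "Psi r gamma p q delta t \<le> (\<Sum>l<r. delta l * t powr gamma l)"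
    using assms by (intro Psi_le_sum)
  also have "\<dots> \<le> (\<Sum>l<r. delta l * t' powr gamma l)"
    using assms by (intro sum_mono mult_left_mono powr_mono2) auto
  finally show ?thesis .
qed

lemma Psi_Psi_le_sum_sum:
  assumes "1 \<le> p" "0 < q" "1 \<le> p'" "0 < q'" "0 \<le> rho"
    and "\<And>j. j < r \<Longrightarrow> 0 \<le> delta j" "\<And>j. j < r \<Longrightarrow> 0 \<le> gamma j"
    and "\<And>l. l < r' \<Longrightarrow> 0 \<le> gamma' l" "0 \<le> t" "t \<le> t'"
  shows "Psi r gamma p q delta (rho * Psi r' gamma' p' q' (\<lambda>_. 1) t)
    \<le> (\<Sum>j<r. delta j * (rho * (\<Sum>l<r'. t' powr gamma' l)) powr gamma j)"
proof -
  have "Psi r' gamma' p' q' (\<lambda>_. 1) t \<le> (\<Sum>l<r'. 1 * t' powr gamma' l)"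
    using assms(3,4,8-10) by (intro Psi_le_sum_of_le) auto
  then have "rho * Psi r' gamma' p' q' (\<lambda>_. 1) t \<le> rho * (\<Sum>l<r'. t' powr gamma' l)"
    using assms(5) by (simp add: mult_left_mono)
  with assms(1,2,5-7) show ?thesis
    by (intro Psi_le_sum_of_le) (auto simp: Psi_nonneg)
qed

lemma lp_norm_nonneg: "0 \<le> lp_norm p d x"
  by (simp add: lp_norm_def)

lemma lp_norm_le_l1_norm:
  assumes "1 \<le> p"
  shows "lp_norm p d x \<le> lp_norm 1 d x"
proof -
  have "lp_norm p d x \<le> ((\<Sum>k<d. \<bar>x k\<bar>) powr p) powr (1 / p)"
    unfolding lp_norm_def using assms
    by (intro powr_mono2 sum_powr_le_powr_sum) (auto intro: sum_nonneg)
  also have "\<dots> = lp_norm 1 d x"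
    using assms by (simp add: lp_norm_def powr_powr sum_nonneg)
  finally show ?thesis .
qed

lemma Max_lp_norm_le_Max_l1_norm:
  fixes n d :: nat and x :: "nat \<Rightarrow> nat \<Rightarrow> real"
  assumes "0 < n" "1 \<le> p"
  shows "0 \<le> Max ((\<lambda>i. lp_norm p d (x i)) ` {..<n})"
    and "Max ((\<lambda>i. lp_norm p d (x i)) ` {..<n}) \<le> Max ((\<lambda>i. lp_norm 1 d (x i)) ` {..<n})"
proof -
  have "lp_norm p d (x 0) \<le> Max ((\<lambda>i. lp_norm p d (x i)) ` {..<n})"
    using assms(1) by (intro Max_ge) auto
  then show "0 \<le> Max ((\<lambda>i. lp_norm p d (x i)) ` {..<n})"
    using lp_norm_nonneg order_trans by blast
  show "Max ((\<lambda>i. lp_norm p d (x i)) ` {..<n}) \<le> Max ((\<lambda>i. lp_norm 1 d (x i)) ` {..<n})"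
    using assms by (intro Max_image_mono lp_norm_le_l1_norm) auto
qed

lemma conj_exp_ge_1: "1 < p \<Longrightarrow> 1 \<le> conj_exp p"
  by (simp add: conj_exp_def)

lemma conj_exp_minus_1: "1 < p \<Longrightarrow> conj_exp p - 1 = 1 / (p - 1)"
  by (simp add: conj_exp_def field_simps)

lemma sup_norm_ge_1:
  assumes "0 < r" "\<And>l. l < r \<Longrightarrow> 1 \<le> g l"
  shows "1 \<le> sup_norm r g"
proof -
  have "\<bar>g 0\<bar> \<le> sup_norm r g" unfolding sup_norm_def using assms by (intro Max_ge) auto
  then show ?thesis using assms by force
qed

lemma norm_eigenvalue_mult_le_row_sum:
  fixes A :: "real mat"
  assumes A: "A \<in> carrier_mat n n" and nonneg: "\<And>i j. i < n \<Longrightarrow> j < n \<Longrightarrow> 0 \<le> A $$ (i,j)"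
    and v: "v \<in> carrier_vec n" "map_mat complex_of_real A *\<^sub>v v = k \<cdot>\<^sub>v v" and i: "i < n"
  shows "norm k * norm (v $ i) \<le> (\<Sum>j<n. A $$ (i,j) * norm (v $ j))"
proof -
  have "k * v $ i = (map_mat complex_of_real A *\<^sub>v v) $ i" using v i by simp
  also have "\<dots> = (\<Sum>j<n. complex_of_real (A $$ (i,j)) * v $ j)"
    using A v(1) i by (simp add: scalar_prod_def lessThan_atLeast0)
  finally have "norm k * norm (v $ i) = norm (\<Sum>j<n. complex_of_real (A $$ (i,j)) * v $ j)"
    by (metis norm_mult)
  also have "\<dots> \<le> (\<Sum>j<n. norm (complex_of_real (A $$ (i,j)) * v $ j))"
    by (rule norm_sum)
  also have "\<dots> = (\<Sum>j<n. A $$ (i,j) * norm (v $ j))"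
    using nonneg i by (intro sum.cong) (auto simp: norm_mult)
  finally show ?thesis .
qed

lemma eigenvalue_norm_lt_1_if_strictly_subinvariant:
  fixes A :: "real mat"
  assumes A: "A \<in> carrier_mat n n"
    and nonneg: "\<And>i j. i < n \<Longrightarrow> j < n \<Longrightarrow> 0 \<le> A $$ (i,j)"
    and pos: "\<And>i. i < n \<Longrightarrow> 0 < d i"
    and sub: "\<And>i. i < n \<Longrightarrow> (\<Sum>j<n. A $$ (i,j) * d j) < d i"
    and "eigenvector (map_mat complex_of_real A) v k"
  shows "norm k < 1"
proof -
  have v: "v \<in> carrier_vec n" "v \<noteq> 0\<^sub>v n" "map_mat complex_of_real A *\<^sub>v v = k \<cdot>\<^sub>v v"
    using assms(1,5) by (auto simp: eigenvector_def)
  obtain j0 where j0: "j0 < n" "v $ j0 \<noteq> 0"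
  proof -
    have "\<exists>j<n. v $ j \<noteq> 0"
    proof (rule ccontr)
      assume "\<not> (\<exists>j<n. v $ j \<noteq> 0)"
      then have "v = 0\<^sub>v n" using v(1) by (intro eq_vecI) auto
      with v(2) show False by simp
    qed
    then show ?thesis using that by blast
  qed
  define m where "m = Max ((\<lambda>j. norm (v $ j) / d j) ` {..<n})"
  obtain i where i: "i < n" "norm (v $ i) / d i = m"
    using Max_in[of "(\<lambda>j. norm (v $ j) / d j) ` {..<n}"] j0(1) unfolding m_def by fastforce
  have v_le: "norm (v $ j) \<le> m * d j" if "j < n" for j
  proof -
    have "norm (v $ j) / d j \<le> m" unfolding m_def using that by (intro Max_ge) auto
    then show ?thesis using pos that by (simp add: divide_le_eq)
  qed
  have "0 < norm (v $ j0) / d j0" using j0 pos by simp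
  also have "\<dots> \<le> m" unfolding m_def using j0 by (intro Max_ge) auto
  finally have "0 < m" .
  have "norm k * norm (v $ i) \<le> (\<Sum>j<n. A $$ (i,j) * norm (v $ j))"
    using A nonneg v(1,3) i(1) by (rule norm_eigenvalue_mult_le_row_sum)
  also have "\<dots> \<le> (\<Sum>j<n. A $$ (i,j) * (m * d j))"
    using nonneg i v_le by (intro sum_mono mult_left_mono) auto
  also have "\<dots> = m * (\<Sum>j<n. A $$ (i,j) * d j)"
    by (simp add: sum_distrib_left algebra_simps)
  also have "\<dots> < m * d i" using sub i \<open>0 < m\<close> by simp
  also have "\<dots> = norm (v $ i)" using i pos[OF i(1)] by (simp add: field_simps)
  finally have "norm k * norm (v $ i) < 1 * norm (v $ i)" by simp
  moreover have "0 < norm (v $ i)"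
    using i \<open>0 < m\<close> pos[OF i(1)] by (metis norm_ge_zero order_less_le zero_less_divide_iff)
  ultimately show ?thesis by (simp only: mult_less_cancel_right)
qed

lemma spectral_radius_lt_1_if_strictly_subinvariant:
  fixes A :: "real mat"
  assumes "A \<in> carrier_mat n n" "0 < n"
    and "\<And>i j. i < n \<Longrightarrow> j < n \<Longrightarrow> 0 \<le> A $$ (i,j)"
    and "\<And>i. i < n \<Longrightarrow> 0 < d i"
    and "\<And>i. i < n \<Longrightarrow> (\<Sum>j<n. A $$ (i,j) * d j) < d i"
  shows "spectral_radius (map_mat complex_of_real A) < 1"
proof -
  obtain k where k: "k \<in> spectrum (map_mat complex_of_real A)"
    and rho: "spectral_radius (map_mat complex_of_real A) = norm k"
    using spectral_radius_mem_max(1)[of "map_mat complex_of_real A" n] assms(1,2) by auto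
  from k obtain v where "eigenvector (map_mat complex_of_real A) v k"
    by (auto simp: spectrum_def eigenvalue_def)
  with assms(1,3-5) show ?thesis
    unfolding rho by (rule eigenvalue_norm_lt_1_if_strictly_subinvariant)
qed

\<comment> \<open>Chosen so that row \<open>i\<close> of \<open>A d\<close> is \<open>d i\<close> times a factor that the lower bounds on
  \<open>p_w, p_v, p_u\<close> make smaller than \<open>1\<close>.\<close>
definition A_mat_weight :: "nat \<Rightarrow> real \<Rightarrow> real \<Rightarrow> real \<Rightarrow> real \<Rightarrow> nat \<Rightarrow> real" where
  "A_mat_weight K C_w C_v n_a n_b j =
     (if j < K then 2 * C_v + n_b else if j = K then 2 * C_w + 1 else (2 * C_w + 1) / n_a)"

lemma A_mat_weight_pos:
  assumes "0 \<le> C_w" "0 \<le> C_v" "1 \<le> n_a" "1 \<le> n_b"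
  shows "0 < A_mat_weight K C_w C_v n_a n_b j"
  using assms by (simp add: A_mat_weight_def)

lemma A_mat_nonneg:
  assumes "1 < p_w" "1 < p_v" "1 < p_u" "0 \<le> C_w" "0 \<le> C_v" "1 \<le> n_a" "1 \<le> n_b"
    and "i < K + 2" "j < K + 2"
  shows "0 \<le> A_mat K p_w p_v p_u C_w C_v (n_a * C_v) n_a n_b $$ (i,j)"
proof -
  have "1 \<le> n_a * n_b" using mult_mono[of 1 n_a 1 n_b] assms(6,7) by simp
  moreover have "0 \<le> n_a * C_v" using assms(5,6) by simp
  ultimately have "1 \<le> 2 * (n_a * C_v) + n_a * n_b" by linarith
  moreover have "0 \<le> conj_exp p_w - 1" "0 \<le> conj_exp p_v - 1" "0 \<le> conj_exp p_u - 1"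
    using assms(1-3) conj_exp_ge_1 by force+
  ultimately show ?thesis
    using assms(4-9) \<open>1 \<le> n_a * n_b\<close> unfolding A_mat_def by (auto intro!: mult_nonneg_nonneg)
qed

lemma A_mat_weight_row_sum_lt:
  fixes K :: nat and p_w p_v p_u C_w C_v n_a n_b :: real
  assumes "1 < p_w" "1 < p_v" "1 < p_u" "0 \<le> C_w" "0 \<le> C_v" "1 \<le> n_a" "1 \<le> n_b"
    and "4 * real (K + 2) * C_w + 5 < p_w"
    and "2 * real (K + 2) * (2 * C_v + n_b) - 1 < p_v"
    and "2 * real (K + 2) * n_a * (2 * C_v + n_b) - 1 < p_u"
    and i: "i < K + 2"
  defines "A \<equiv> A_mat K p_w p_v p_u C_w C_v (n_a * C_v) n_a n_b"
    and "d \<equiv> A_mat_weight K C_w C_v n_a n_b"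
  shows "(\<Sum>j<K + 2. A $$ (i,j) * d j) < d i"
proof -
  define a where "a = conj_exp p_w - 1"
  define b where "b = conj_exp p_v - 1"
  define c where "c = conj_exp p_u - 1"
  define S where "S = 2 * C_v + n_b"
  have factors: "a * (4 * (real K + 2) * C_w + 4) < 1"
    "b * (2 * (real K + 2) * S - 2) < 1"
    "c * (2 * (real K + 2) * n_a * S - 2) < 1"
    using assms(1-10) unfolding a_def b_def c_def S_def
    by (simp_all add: conj_exp_minus_1 field_simps)
  have "0 < d i" unfolding d_def using assms(4-7) by (rule A_mat_weight_pos)
  have sum_split: "(\<Sum>j<K + 2. A $$ (i,j) * d j)
      = (\<Sum>j<K. A $$ (i,j) * d j) + A $$ (i,K) * d K + A $$ (i,K + 1) * d (K + 1)"
    by (simp add: numeral_2_eq_2)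
  consider "i < K" | "i = K" | "i = K + 1" using i by linarith
  then show ?thesis
  proof cases
    case 1
    have "(\<Sum>j<K. A $$ (i,j) * d j) = (\<Sum>j<K. 4 * a * C_w * S)"
      using 1 by (intro sum.cong) (auto simp: A_def A_mat_def a_def d_def A_mat_weight_def S_def)
    then have "(\<Sum>j<K + 2. A $$ (i,j) * d j) = d i * (a * (4 * (real K + 2) * C_w + 4))"
      using 1 assms(6) unfolding sum_split
      by (simp add: A_def A_mat_def a_def d_def A_mat_weight_def S_def field_simps)
    then show ?thesis using factors \<open>0 < d i\<close> by (simp add: mult_less_cancel_left1)
  next
    case 2
    have "(\<Sum>j<K. A $$ (i,j) * d j) = (\<Sum>j<K. 2 * b * (2 * C_w + 1) * S)"
      using 2 by (intro sum.cong) (auto simp: A_def A_mat_def b_def d_def A_mat_weight_def S_def)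
    then have "(\<Sum>j<K + 2. A $$ (i,j) * d j) = d i * (b * (2 * (real K + 2) * S - 2))"
      using 2 assms(6) unfolding sum_split
      by (simp add: A_def A_mat_def b_def d_def A_mat_weight_def S_def field_simps)
    then show ?thesis using factors \<open>0 < d i\<close> by (simp add: mult_less_cancel_left1)
  next
    case 3
    have "(\<Sum>j<K. A $$ (i,j) * d j) = (\<Sum>j<K. 2 * c * (2 * C_w + 1) * S)"
      using 3 by (intro sum.cong) (auto simp: A_def A_mat_def c_def d_def A_mat_weight_def S_def)
    then have "(\<Sum>j<K + 2. A $$ (i,j) * d j) = d i * (c * (2 * (real K + 2) * n_a * S - 2))"
      using 3 assms(6) unfolding sum_split
      by (simp add: A_def A_mat_def c_def d_def A_mat_weight_def S_def field_simps)
    then show ?thesis using factors \<open>0 < d i\<close> by (simp add: mult_less_cancel_left1)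
  qed
qed

lemma spectral_radius_A_mat_lt_1:
  fixes K :: nat and p_w p_v p_u C_w C_v Z_w Z_v n_a n_b :: real
  assumes "1 < p_w" "1 < p_v" "1 < p_u" "0 \<le> C_w" "0 \<le> C_v" "1 \<le> n_a" "1 \<le> n_b"
    and "C_w \<le> Z_w" "C_v \<le> Z_v"
    and "4 * real (K + 2) * Z_w + 5 < p_w"
    and "2 * real (K + 2) * (2 * Z_v + n_b) - 1 < p_v"
    and "2 * real (K + 2) * n_a * (2 * Z_v + n_b) - 1 < p_u"
  shows "spectral_radius (map_mat complex_of_real
           (A_mat K p_w p_v p_u C_w C_v (n_a * C_v) n_a n_b)) < 1"
proof -
  have "4 * real (K + 2) * C_w \<le> 4 * real (K + 2) * Z_w"
    "2 * real (K + 2) * (2 * C_v + n_b) \<le> 2 * real (K + 2) * (2 * Z_v + n_b)"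
    "2 * real (K + 2) * n_a * (2 * C_v + n_b) \<le> 2 * real (K + 2) * n_a * (2 * Z_v + n_b)"
    using assms(6,8,9) by (intro mult_left_mono; simp)+
  with assms(10-12) have p_bounds: "4 * real (K + 2) * C_w + 5 < p_w"
    "2 * real (K + 2) * (2 * C_v + n_b) - 1 < p_v"
    "2 * real (K + 2) * n_a * (2 * C_v + n_b) - 1 < p_u"
    by linarith+
  show ?thesis
  proof (rule spectral_radius_lt_1_if_strictly_subinvariant[where d = "A_mat_weight K C_w C_v n_a n_b"])
    show "A_mat K p_w p_v p_u C_w C_v (n_a * C_v) n_a n_b \<in> carrier_mat (K + 2) (K + 2)"
      by (simp add: A_mat_def)
    show "(\<Sum>j<K + 2. A_mat K p_w p_v p_u C_w C_v (n_a * C_v) n_a n_b $$ (i,j)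
        * A_mat_weight K C_w C_v n_a n_b j) < A_mat_weight K C_w C_v n_a n_b i" if "i < K + 2" for i
      using assms(1-7) p_bounds that by (rule A_mat_weight_row_sum_lt)
  qed (use assms(1-7) in \<open>auto intro: A_mat_nonneg A_mat_weight_pos\<close>)
qed

theorem mainTheorem14:
  fixes K n1 n2 n d :: nat
    and rho_x theta C_w C_v C_u rho_x1 zeta_1 zeta_2 :: real and A :: "real mat"
    and rho_w rho_v rho_u p_w p_v p_u :: real
    and alpha beta :: "nat \<Rightarrow> real"
    and x :: "nat \<Rightarrow> nat \<Rightarrow> real"
  assumes "K \<ge> 1" "n1 \<ge> 1" "n2 \<ge> 1" "n \<ge> 1"
    and "rho_w > 0" "rho_v > 0" "rho_u > 0"
    and "p_w > 1" "p_v > 1" "p_u > 1"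
    and "\<forall>l<n1. alpha l \<ge> 1" "\<forall>j<n2. beta j \<ge> 1"
    and "\<forall>i<n. \<forall>k<d. x i k \<ge> 0"
    and "rho_x = Max ((\<lambda>i. lp_norm (conj_exp p_u) d (x i)) ` {..<n})"
    and "theta = rho_v * Psi n1 alpha (conj_exp p_v) p_u (\<lambda>_. 1) (rho_u * rho_x)"
    and "C_w = rho_w * Psi n2 beta (conj_exp p_w) p_v (\<lambda>_. 1) theta"
    and "C_v = rho_w * Psi n2 beta (conj_exp p_w) p_v beta theta"
    and "C_u = sup_norm n1 alpha * C_v"
    and "A = A_mat K p_w p_v p_u C_w C_v C_u (sup_norm n1 alpha) (sup_norm n2 beta)"
    and "rho_x1 = Max ((\<lambda>i. lp_norm 1 d (x i)) ` {..<n})"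
    and "zeta_1 = rho_w * (\<Sum>j<n2. (rho_v * (\<Sum>l<n1. (rho_u * rho_x1) powr alpha l)) powr beta j)"
    and "zeta_2 = rho_w * (\<Sum>j<n2. beta j * (rho_v * (\<Sum>l<n1. (rho_u * rho_x1) powr alpha l)) powr beta j)"
  shows "C_w \<le> zeta_1 \<and> C_v \<le> zeta_2 \<and>
    ((p_w > 4 * real (K + 2) * zeta_1 + 5 \<and>
      p_v > 2 * real (K + 2) * (2 * zeta_2 + sup_norm n2 beta) - 1 \<and>
      p_u > 2 * real (K + 2) * sup_norm n1 alpha * (2 * zeta_2 + sup_norm n2 beta) - 1)
     \<longrightarrow> spectral_radius (map_mat complex_of_real A) < 1)"
proof -
  have conj: "1 \<le> conj_exp p_w" "1 \<le> conj_exp p_v" "1 \<le> conj_exp p_u"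
    using assms(8-10) by (simp_all add: conj_exp_ge_1)
  have "0 \<le> rho_x" "rho_x \<le> rho_x1"
    unfolding assms(14,20) using assms(4) conj(3) by (simp_all add: Max_lp_norm_le_Max_l1_norm)
  with assms(7) have "0 \<le> rho_u * rho_x" "rho_u * rho_x \<le> rho_u * rho_x1"
    by simp_all
  then have C_w_le: "C_w \<le> zeta_1" and C_v_le: "C_v \<le> zeta_2"
    unfolding assms(15-17,21,22) using assms(5-12) conj(1,2)
    by (auto intro!: mult_left_mono Psi_Psi_le_sum_sum[where delta = "\<lambda>_. 1", simplified]
        Psi_Psi_le_sum_sum[where delta = beta])
  moreover have "spectral_radius (map_mat complex_of_real A) < 1"
    if "p_w > 4 * real (K + 2) * zeta_1 + 5"
      "p_v > 2 * real (K + 2) * (2 * zeta_2 + sup_norm n2 beta) - 1"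
      "p_u > 2 * real (K + 2) * sup_norm n1 alpha * (2 * zeta_2 + sup_norm n2 beta) - 1"
  proof -
    have "1 \<le> sup_norm n1 alpha" "1 \<le> sup_norm n2 beta"
      using assms(2,3,11,12) by (auto intro!: sup_norm_ge_1)
    moreover have "0 \<le> C_w" "0 \<le> C_v"
      unfolding assms(16,17) using assms(5) by (simp_all add: Psi_nonneg)
    ultimately show ?thesis unfolding assms(18,19)
      using assms(8-10) C_w_le C_v_le that by (intro spectral_radius_A_mat_lt_1)
  qed
  ultimately show ?thesis by blast
qed

end
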